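(* There is an absolute constant $C>0$ such that for every $r\ge1$ and all $j,l\in\{0,\ldots,r-1\}$, $$\|U_{jl}\|_2\le C\,2^{-|j-l|/2},$$ where $\|\cdot\|_2$ denotes the operator norm induced by the Euclidean norm.
   Context: Let $n=2^r$, $\mathcal{F}x(\omega)=\frac{1}{\sqrt n}\sum_{t=0}^{n-1}x(t)e^{2\pi i\omega t/n}$ for $x\in\mathbb{C}^n$. Haar vectors: $\psi(t)=2^{-r/2}$ ($0\le t<2^r$); for $l=0,\ldots,r-1$, $p=0,\ldots,2^l-1$: $\phi_{l,p}(t)=2^{(l-r)/2}$ if $p2^{r-l}\le t<(p+\tfrac12)2^{r-l}$, $-2^{(l-r)/2}$ if $(p+\tfrac12)2^{r-l}\le t<(p+1)2^{r-l}$, $0$ otherwise. Frequency bands: $W_0=\{0,1\}$, $W_j=\{-2^j+1,\ldots,-2^{j-1}\}\cup\{2^{j-1}+1,\ldots,2^j\}$ for $j=1,\ldots,r-1$. For $j,l\in\{0,\ldots,r-1\}$, $U_{jl}$ is the matrix with rows indexed by $\omega\in W_j$ and: for $l\ge1$, columns indexed by $p=0,\ldots,2^l-1$ with entries $(U_{jl})_{\omega,p}=\mathcal{F}\phi_{l,p}(\omega)$; for $l=0$, two columns with entries $(U_{j0})_{\omega,0}=\mathcal{F}\psi(\omega)$, $(U_{j0})_{\omega,1}=\mathcal{F}\phi_{0,0}(\omega)$. *)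

theory Defs
  imports "HOL-Analysis.Analysis"
begin

text \<open>Vectors in C^n with n = 2^r are functions nat => complex, only indices t < 2^r matter.\<close>

definition fourier :: "nat \<Rightarrow> (nat \<Rightarrow> complex) \<Rightarrow> int \<Rightarrow> complex" where
  "fourier r x \<omega> = (1 / sqrt (2 ^ r)) *
     (\<Sum>t<2^r. x t * exp (2 * pi * \<i> * of_int \<omega> * of_nat t / 2 ^ r))"

definition haar_psi :: "nat \<Rightarrow> nat \<Rightarrow> complex" where
  "haar_psi r t = (if t < 2^r then complex_of_real (2 powr (- real r / 2)) else 0)"

definition haar_phi :: "nat \<Rightarrow> nat \<Rightarrow> nat \<Rightarrow> nat \<Rightarrow> complex" where
  "haar_phi r l p t =
     (if real p * 2 ^ (r - l) \<le> real t \<and> real t < (real p + 1/2) * 2 ^ (r - l)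
      then complex_of_real (2 powr ((real l - real r) / 2))
      else if (real p + 1/2) * 2 ^ (r - l) \<le> real t \<and> real t < (real p + 1) * 2 ^ (r - l)
      then complex_of_real (- (2 powr ((real l - real r) / 2)))
      else 0)"

definition band :: "nat \<Rightarrow> int set" where
  "band j = (if j = 0 then {0, 1}
             else {- (2^j) + 1 .. - (2^(j-1))} \<union> {2^(j-1) + 1 .. 2^j})"

definition cols :: "nat \<Rightarrow> nat set" where
  "cols l = (if l = 0 then {0, 1} else {0..<2^l})"

text \<open>Entries of U_{jl}: rows omega in band j, columns p in cols l.\<close>
definition Ublock :: "nat \<Rightarrow> nat \<Rightarrow> nat \<Rightarrow> int \<Rightarrow> nat \<Rightarrow> complex" where
  "Ublock r j l \<omega> p =
     (if l = 0 then (if p = 0 then fourier r (haar_psi r) \<omega> else fourier r (haar_phi r 0 0) \<omega>)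
      else fourier r (haar_phi r l p) \<omega>)"

definition op_norm2 :: "('a \<Rightarrow> 'b \<Rightarrow> complex) \<Rightarrow> 'a set \<Rightarrow> 'b set \<Rightarrow> real" where
  "op_norm2 M R P = Sup {sqrt (\<Sum>\<omega>\<in>R. (cmod (\<Sum>p\<in>P. M \<omega> p * x p))\<^sup>2) | x.
                          (\<Sum>p\<in>P. (cmod (x p))\<^sup>2) \<le> 1}"

end

theory Submission
  imports Defs
begin

text \<open>
  For l \<ge> 1 every Haar vector phi_{l,p} is the translate of phi_{l,0} by p 2^(r-l), so row omega
  of U_{jl} is F phi_{l,0}(omega) times the length-2^l discrete Fourier transform of the column
  vector, evaluated at omega. The band W_j lies in a window of 2^(max j l + 1) consecutive
  frequencies, and Parseval on that window bounds the squared norm of U_{jl} by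
  2^(max j l + 1) sup_{W_j} |F phi_{l,0}|^2. The closed geometric-sum form of F phi_{l,0} gives
  |F phi_{l,0}(omega)|^2 \<le> pi^2 omega^2 / (4 * 8^l) and, for 0 < |omega| \<le> n/2,
  |F phi_{l,0}(omega)|^2 \<le> 9 * 2^l / omega^2; these give the decay for j \<le> l and for l < j.
  For l = 0 the two columns are estimated row by row, F psi vanishing on every band W_j with j > 0.
\<close>

section \<open>Trigonometric estimates\<close>

lemma cmod_1_minus_cis_sq: "(cmod (1 - cis x))\<^sup>2 = 4 * (sin (x / 2))\<^sup>2"
proof -
  have "(cmod (1 - cis x))\<^sup>2 = (1 - cos x)\<^sup>2 + (sin x)\<^sup>2"
    by (simp add: cmod_power2)
  also have "\<dots> = 2 - 2 * cos x"
    using sin_cos_squared_add[of x] by (simp add: power2_eq_square algebra_simps)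
  also have "cos x = 1 - 2 * (sin (x / 2))\<^sup>2"
    using cos_double_sin[of "x / 2"] by simp
  finally show ?thesis by simp
qed

lemma cmod_1_minus_cis_sq_le: "(cmod (1 - cis x))\<^sup>2 \<le> x\<^sup>2"
proof -
  have "(sin (x / 2))\<^sup>2 \<le> (x / 2)\<^sup>2"
    using abs_sin_x_le_abs_x[of "x / 2"] by (metis abs_ge_zero power2_abs power_mono)
  then show ?thesis unfolding cmod_1_minus_cis_sq by (simp add: power_divide)
qed

lemma cmod_1_minus_cis_sq_le_4: "(cmod (1 - cis x))\<^sup>2 \<le> 4"
  unfolding cmod_1_minus_cis_sq by (simp add: abs_square_le_1)

lemma abs_sin_ge_third:
  assumes "\<bar>y\<bar> \<le> pi / 2"
  shows "\<bar>y\<bar> / 3 \<le> \<bar>sin y\<bar>"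
proof -
  have "(\<Sum>m<3. sin_coeff m * y ^ m) = y"
    by (simp add: sin_coeff_def eval_nat_numeral)
  then have "\<bar>sin y - y\<bar> \<le> \<bar>y\<bar> ^ 3 / 6"
    using Maclaurin_sin_bound[of y 3] by (simp add: eval_nat_numeral)
  moreover have "\<bar>y\<bar> ^ 3 \<le> 4 * \<bar>y\<bar>"
  proof -
    have "\<bar>y\<bar> \<le> 2" using assms pi_less_4 by linarith
    then have "\<bar>y\<bar> * \<bar>y\<bar> \<le> 2 * 2" by (intro mult_mono) auto
    from mult_right_mono[OF this abs_ge_zero] show ?thesis unfolding power3_eq_cube by simp
  qed
  ultimately show ?thesis by linarith
qed

lemma cmod_1_minus_cis_sq_ge:
  assumes "\<bar>x\<bar> \<le> pi"
  shows "x\<^sup>2 / 9 \<le> (cmod (1 - cis x))\<^sup>2"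
proof -
  have "\<bar>x / 2\<bar> / 3 \<le> \<bar>sin (x / 2)\<bar>" using assms by (intro abs_sin_ge_third) simp
  then have "(\<bar>x / 2\<bar> / 3)\<^sup>2 \<le> \<bar>sin (x / 2)\<bar>\<^sup>2" by (intro power_mono) auto
  then show ?thesis unfolding cmod_1_minus_cis_sq by (simp add: power_divide)
qed

section \<open>Operator norms and discrete Fourier analysis on frequency windows\<close>

lemma cmod_sum_mult_sq_le:
  "(cmod (\<Sum>p\<in>P. a p * x p))\<^sup>2 \<le> (\<Sum>p\<in>P. (cmod (a p))\<^sup>2) * (\<Sum>p\<in>P. (cmod (x p))\<^sup>2)"
proof -
  have "cmod (\<Sum>p\<in>P. a p * x p) \<le> (\<Sum>p\<in>P. cmod (a p) * cmod (x p))"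
    using norm_sum[of "\<lambda>p. a p * x p" P] by (simp add: norm_mult)
  then have "(cmod (\<Sum>p\<in>P. a p * x p))\<^sup>2 \<le> (\<Sum>p\<in>P. cmod (a p) * cmod (x p))\<^sup>2"
    by (intro power_mono) auto
  also have "\<dots> \<le> (\<Sum>p\<in>P. (cmod (a p))\<^sup>2) * (\<Sum>p\<in>P. (cmod (x p))\<^sup>2)"
    by (rule Cauchy_Schwarz_ineq_sum)
  finally show ?thesis .
qed

lemma sum_power_shift: "(\<Sum>t\<in>{a..<a + n}. (w::'a::comm_semiring_1) ^ t) = w ^ a * (\<Sum>s<n. w ^ s)"
  by (induction n) (simp_all add: power_add algebra_simps)

lemma int_interval_eq_image: "{a..<a + int N} = (\<lambda>s. a + int s) ` {..<N}"
proof (intro set_eqI iffI)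
  fix x assume "x \<in> {a..<a + int N}"
  then show "x \<in> (\<lambda>s. a + int s) ` {..<N}" by (intro image_eqI[of _ _ "nat (x - a)"]) auto
qed auto

lemma cis_2pi_fraction_neq_1:
  fixes m :: int
  assumes "M > 0" "\<bar>m\<bar> < int M" "m \<noteq> 0"
  shows "cis (2 * pi * of_int m / M) \<noteq> 1"
proof
  assume "cis (2 * pi * of_int m / M) = 1"
  then obtain n :: int where "2 * pi * of_int m / M = 2 * pi * of_int n"
    unfolding cis_conv_exp exp_eq_1 by auto
  then have "real_of_int m = of_int n * real M" using assms(1) by (simp add: field_simps)
  then have "m = n * int M" by (metis of_int_eq_iff of_int_mult of_int_of_nat_eq)
  moreover have "1 \<le> \<bar>n\<bar>" using assms(3) \<open>m = n * int M\<close> by auto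
  ultimately have "1 * int M \<le> \<bar>m\<bar>" by (simp add: abs_mult mult_right_mono del: mult_1)
  then show False using assms(2) by simp
qed

lemma sum_cis_window:
  fixes m :: int
  assumes "M > 0" "\<bar>m\<bar> < int M" "N = k * M"
  shows "(\<Sum>\<omega>\<in>{a..<a + int N}. cis (2 * pi * of_int \<omega> * of_int m / M))
         = (if m = 0 then of_nat N else 0)"
proof -
  define w where "w = cis (2 * pi * of_int m / M)"
  have "cis (2 * pi * of_int (a + int s) * of_int m / M) = cis (2 * pi * of_int a * of_int m / M) * w ^ s"
    for s unfolding w_def Complex.DeMoivre cis_mult
    by (rule arg_cong[where f=cis]) (simp add: algebra_simps add_divide_distrib)
  then have "(\<Sum>\<omega>\<in>{a..<a + int N}. cis (2 * pi * of_int \<omega> * of_int m / M))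
      = (\<Sum>s<N. cis (2 * pi * of_int a * of_int m / M) * w ^ s)"
    unfolding int_interval_eq_image by (subst sum.reindex) (auto simp: inj_on_def)
  also have "\<dots> = (if m = 0 then of_nat N else 0)"
  proof (cases "m = 0")
    case False
    have "w \<noteq> 1" unfolding w_def using assms(1,2) False by (rule cis_2pi_fraction_neq_1)
    moreover have "w ^ N = 1"
    proof -
      have "w ^ N = cis (2 * pi * of_int (int k * m))"
        unfolding w_def Complex.DeMoivre assms(3) using assms(1) by (simp add: field_simps)
      then show ?thesis by simp
    qed
    ultimately show ?thesis using False by (simp add: sum_gp_strict flip: sum_distrib_left)
  qed (simp add: w_def)
  finally show ?thesis .
qed

lemma parseval_window:
  assumes "M > 0" "N = k * M"
  shows "(\<Sum>\<omega>\<in>{a..<a + int N}. (cmod (\<Sum>p<M. x p * cis (2 * pi * of_int \<omega> * of_nat p / M)))\<^sup>2)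
       = real N * (\<Sum>p<M. (cmod (x p))\<^sup>2)"
proof -
  define E where "E \<omega> p = cis (2 * pi * of_int \<omega> * of_nat p / M)" for \<omega> :: int and p :: nat
  have E_mult_cnj: "E \<omega> p * cnj (E \<omega> q) = cis (2 * pi * of_int \<omega> * of_int (int p - int q) / M)"
    for \<omega> p q
    unfolding E_def cis_cnj cis_mult by (rule arg_cong[where f=cis]) (simp add: algebra_simps diff_divide_distrib)
  have "complex_of_real ((cmod (\<Sum>p<M. x p * E \<omega> p))\<^sup>2)
      = (\<Sum>p<M. \<Sum>q<M. x p * cnj (x q) * (E \<omega> p * cnj (E \<omega> q)))" for \<omega>
    unfolding complex_norm_square cnj_sum complex_cnj_mult sum_product by (simp add: ac_simps)
  then have "complex_of_real (\<Sum>\<omega>\<in>{a..<a + int N}. (cmod (\<Sum>p<M. x p * E \<omega> p))\<^sup>2)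
     = (\<Sum>p<M. \<Sum>q<M. x p * cnj (x q) *
          (\<Sum>\<omega>\<in>{a..<a + int N}. cis (2 * pi * of_int \<omega> * of_int (int p - int q) / M)))"
    unfolding of_real_sum E_mult_cnj by (simp add: sum_distrib_left sum.swap[where A="{a..<a + int N}"])
  also have "\<dots> = (\<Sum>p<M. \<Sum>q<M. x p * cnj (x q) * (if p = q then of_nat N else 0))"
  proof (intro sum.cong refl)
    fix p q assume "p \<in> {..<M}" "q \<in> {..<M}"
    then have "\<bar>int p - int q\<bar> < int M" by auto
    from sum_cis_window[OF assms(1) this assms(2)]
    show "x p * cnj (x q) * (\<Sum>\<omega>\<in>{a..<a + int N}. cis (2 * pi * of_int \<omega> * of_int (int p - int q) / M))
        = x p * cnj (x q) * (if p = q then of_nat N else 0)" by simp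
  qed
  also have "\<dots> = (\<Sum>p<M. of_nat N * (x p * cnj (x p)))"
    by (simp add: if_distrib[of "\<lambda>z. _ * z"] mult_ac cong: if_cong)
  also have "\<dots> = complex_of_real (real N * (\<Sum>p<M. (cmod (x p))\<^sup>2))"
    by (simp only: complex_norm_square[symmetric] of_real_sum sum_distrib_left of_real_mult of_real_of_nat_eq)
  finally show ?thesis unfolding E_def of_real_eq_iff .
qed

definition sqnorm_apply ::
    "('a \<Rightarrow> 'b \<Rightarrow> complex) \<Rightarrow> 'a set \<Rightarrow> 'b set \<Rightarrow> ('b \<Rightarrow> complex) \<Rightarrow> real" where
  "sqnorm_apply M R P x = (\<Sum>\<omega>\<in>R. (cmod (\<Sum>p\<in>P. M \<omega> p * x p))\<^sup>2)"

lemma op_norm2_le: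
  assumes "0 \<le> B" "\<And>x. (\<Sum>p\<in>P. (cmod (x p))\<^sup>2) \<le> 1 \<Longrightarrow> sqnorm_apply M R P x \<le> B\<^sup>2"
  shows "op_norm2 M R P \<le> B"
  unfolding op_norm2_def
proof (rule cSup_least)
  show "{sqrt (\<Sum>\<omega>\<in>R. (cmod (\<Sum>p\<in>P. M \<omega> p * x p))\<^sup>2) |x. (\<Sum>p\<in>P. (cmod (x p))\<^sup>2) \<le> 1} \<noteq> {}"
    by (auto intro!: exI[of _ "\<lambda>_. 0"])
next
  fix v assume "v \<in> {sqrt (\<Sum>\<omega>\<in>R. (cmod (\<Sum>p\<in>P. M \<omega> p * x p))\<^sup>2) |x. (\<Sum>p\<in>P. (cmod (x p))\<^sup>2) \<le> 1}"
  then obtain x where v: "v = sqrt (sqnorm_apply M R P x)" and x: "(\<Sum>p\<in>P. (cmod (x p))\<^sup>2) \<le> 1"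
    unfolding sqnorm_apply_def by blast
  have "v \<le> sqrt (B\<^sup>2)" unfolding v by (rule real_sqrt_le_mono[OF assms(2)[OF x]])
  then show "v \<le> B" using assms(1) by simp
qed

lemma sqnorm_apply_le_frobenius:
  "sqnorm_apply M R P x \<le> (\<Sum>\<omega>\<in>R. \<Sum>p\<in>P. (cmod (M \<omega> p))\<^sup>2) * (\<Sum>p\<in>P. (cmod (x p))\<^sup>2)"
  unfolding sqnorm_apply_def by (subst sum_distrib_right) (intro sum_mono cmod_sum_mult_sq_le)

lemma sqnorm_apply_le_modulated_dft:
  assumes "K > 0" "R \<subseteq> {a..<a + int (k * K)}" "0 \<le> A"
    and M: "\<And>\<omega> p. \<omega> \<in> R \<Longrightarrow> p < K \<Longrightarrow> M \<omega> p = f \<omega> * cis (2 * pi * of_int \<omega> * of_nat p / K)"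
    and f: "\<And>\<omega>. \<omega> \<in> R \<Longrightarrow> (cmod (f \<omega>))\<^sup>2 \<le> A"
  shows "sqnorm_apply M R {..<K} x \<le> A * (k * K) * (\<Sum>p<K. (cmod (x p))\<^sup>2)"
proof -
  define g where "g \<omega> = (\<Sum>p<K. x p * cis (2 * pi * of_int \<omega> * of_nat p / K))" for \<omega>
  have "(\<Sum>p<K. M \<omega> p * x p) = f \<omega> * g \<omega>" if "\<omega> \<in> R" for \<omega>
    unfolding g_def sum_distrib_left using M[OF that] by (intro sum.cong) (auto simp: ac_simps)
  then have "sqnorm_apply M R {..<K} x = (\<Sum>\<omega>\<in>R. (cmod (f \<omega>))\<^sup>2 * (cmod (g \<omega>))\<^sup>2)"
    unfolding sqnorm_apply_def by (intro sum.cong refl) (simp add: norm_mult power_mult_distrib)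
  also have "\<dots> \<le> A * (\<Sum>\<omega>\<in>R. (cmod (g \<omega>))\<^sup>2)"
    unfolding sum_distrib_left by (intro sum_mono mult_right_mono f) auto
  also have "\<dots> \<le> A * (\<Sum>\<omega>\<in>{a..<a + int (k * K)}. (cmod (g \<omega>))\<^sup>2)"
    by (intro mult_left_mono sum_mono2 assms(2,3)) auto
  also have "\<dots> = A * (k * K) * (\<Sum>p<K. (cmod (x p))\<^sup>2)"
    unfolding g_def parseval_window[OF assms(1) refl] by simp
  finally show ?thesis .
qed

section \<open>Fourier transforms of Haar vectors\<close>

definition twiddle :: "nat \<Rightarrow> int \<Rightarrow> complex" where
  "twiddle r \<omega> = cis (2 * pi * of_int \<omega> / 2 ^ r)"

lemma twiddle_power: "twiddle r \<omega> ^ k = cis (real k * (2 * pi * of_int \<omega> / 2 ^ r))"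
  \<comment> \<open>qualified: HOL-Analysis shadows \<open>DeMoivre\<close> by a statement about \<open>cos z + \<i> * sin z\<close>\<close>
  unfolding twiddle_def Complex.DeMoivre ..

lemma norm_twiddle [simp]: "norm (twiddle r \<omega>) = 1"
  unfolding twiddle_def by simp

lemma fourier_eq_twiddle:
  "fourier r x \<omega> = of_real (1 / sqrt (2 ^ r)) * (\<Sum>t<2^r. x t * twiddle r \<omega> ^ t)"
proof -
  have "exp (2 * pi * \<i> * of_int \<omega> * of_nat t / 2 ^ r) = twiddle r \<omega> ^ t" for t
    unfolding twiddle_power cis_conv_exp by (simp add: field_simps)
  then show ?thesis unfolding fourier_def by simp
qed

definition haar_amp :: "nat \<Rightarrow> nat \<Rightarrow> complex" where
  "haar_amp r l = complex_of_real (2 powr ((real l - real r) / 2))"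

lemma haar_phi_eq_indicators:
  assumes "r - l = Suc d"
  shows "haar_phi r l p t =
    (if t \<in> {p * (2 * 2^d)..<p * (2 * 2^d) + 2^d} then haar_amp r l else 0)
    + (if t \<in> {p * (2 * 2^d) + 2^d..<p * (2 * 2^d) + 2 * 2^d} then - haar_amp r l else 0)"
proof -
  have "(2::real) ^ (r - l) = 2 * 2^d" using assms by simp
  then have e: "real p * 2 ^ (r - l) = real (p * (2 * 2^d))"
    "(real p + 1/2) * 2 ^ (r - l) = real (p * (2 * 2^d) + 2^d)"
    "(real p + 1) * 2 ^ (r - l) = real (p * (2 * 2^d) + 2 * 2^d)"
    by (simp_all add: algebra_simps)
  show ?thesis unfolding haar_phi_def haar_amp_def e of_nat_le_iff of_nat_less_iff by auto
qed

lemma sum_haar_phi_power: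
  assumes "r - l = Suc d" "p < 2^l"
  shows "(\<Sum>t<2^r. haar_phi r l p t * w^t)
      = haar_amp r l * w ^ (p * (2 * 2^d)) * (1 - w ^ 2^d) * (\<Sum>s<2^d. w^s)"
proof -
  define a where "a = p * (2 * 2^d)"
  have "a + 2 * 2^d = (p + 1) * 2 ^ Suc d" unfolding a_def by simp
  also have "\<dots> \<le> 2^l * 2 ^ Suc d" using assms(2) by (intro mult_right_mono) auto
  also have "\<dots> = 2^r"
  proof -
    have "r = l + Suc d" using assms(1) by linarith
    then show ?thesis by (simp add: power_add)
  qed
  finally have A: "{a..<a + 2^d} \<subseteq> {..<2^r}" and B: "{a + 2^d..<a + 2^d + 2^d} \<subseteq> {..<2^r}"
    by auto
  have restrict: "(\<Sum>t\<in>I. f t) = (\<Sum>t<2^r. if t \<in> I then f t else 0)" if "I \<subseteq> {..<2^r}"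
    for I and f :: "nat \<Rightarrow> complex"
    using sum.inter_restrict[where A="{..<2^r}" and g=f and B=I] that by (simp add: Int_absorb1)
  have "(\<Sum>t<2^r. haar_phi r l p t * w^t)
       = (\<Sum>t<2^r. if t \<in> {a..<a + 2^d} then haar_amp r l * w^t else 0)
         + (\<Sum>t<2^r. if t \<in> {a + 2^d..<a + 2^d + 2^d} then - haar_amp r l * w^t else 0)"
    unfolding sum.distrib[symmetric]
    by (intro sum.cong refl) (simp add: haar_phi_eq_indicators[OF assms(1)] a_def mult_2 add.assoc)
  also have "\<dots> = (\<Sum>t\<in>{a..<a + 2^d}. haar_amp r l * w^t)
      + (\<Sum>t\<in>{a + 2^d..<a + 2^d + 2^d}. - haar_amp r l * w^t)"
    by (simp only: restrict[OF A] restrict[OF B])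
  also have "\<dots> = haar_amp r l * w^a * (1 - w ^ 2^d) * (\<Sum>s<2^d. w^s)"
    unfolding sum_negf sum_distrib_left[symmetric] sum_power_shift by (simp add: power_add algebra_simps)
  finally show ?thesis unfolding a_def .
qed

lemma fourier_haar_phi:
  assumes "r - l = Suc d" "p < 2^l"
  shows "fourier r (haar_phi r l p) \<omega> = of_real (1 / sqrt (2 ^ r)) * haar_amp r l
    * twiddle r \<omega> ^ (p * (2 * 2^d)) * (1 - twiddle r \<omega> ^ 2^d) * (\<Sum>s<2^d. twiddle r \<omega> ^ s)"
  unfolding fourier_eq_twiddle sum_haar_phi_power[OF assms] by (simp add: mult.assoc)

lemma fourier_haar_phi_translate:
  assumes "l < r" "p < 2^l"
  shows "fourier r (haar_phi r l p) \<omega>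
    = cis (2 * pi * of_int \<omega> * of_nat p / 2^l) * fourier r (haar_phi r l 0) \<omega>"
proof -
  obtain d where d: "r - l = Suc d" using assms(1) by (metis Suc_diff_Suc)
  then have "r = l + Suc d" by linarith
  then have "(2::real) ^ r = 2^l * (2 * 2^d)" by (simp add: power_add)
  then have "twiddle r \<omega> ^ (p * (2 * 2^d)) = cis (2 * pi * of_int \<omega> * of_nat p / 2^l)"
    unfolding twiddle_power by (simp add: field_simps)
  then show ?thesis
    using fourier_haar_phi[OF d assms(2)] fourier_haar_phi[OF d, of 0] by simp
qed

lemma norm_haar_amp_sq:
  assumes "l \<le> r"
  shows "(cmod (haar_amp r l))\<^sup>2 = 1 / 2^(r - l)"
proof -
  have "(cmod (haar_amp r l))\<^sup>2 = 2 powr ((real l - real r) / 2) * 2 powr ((real l - real r) / 2)"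
    unfolding haar_amp_def by (simp add: power2_eq_square)
  also have "\<dots> = 2 powr (- real (r - l))"
    using assms by (simp add: of_nat_diff flip: powr_add)
  finally show ?thesis by (simp add: powr_minus_divide powr_realpow)
qed

lemma norm_fourier_haar_phi_sq:
  assumes "r - l = Suc d"
  shows "(cmod (fourier r (haar_phi r l 0) \<omega>))\<^sup>2 = 1 / 2^r * (1 / 2^(r - l))
    * (cmod (1 - twiddle r \<omega> ^ 2^d))\<^sup>2 * (cmod (\<Sum>s<2^d. twiddle r \<omega> ^ s))\<^sup>2"
proof -
  have "(cmod (of_real (1 / sqrt (2 ^ r)) :: complex))\<^sup>2 = 1 / 2^r"
    by (simp add: norm_divide power_divide)
  moreover have "(cmod (haar_amp r l))\<^sup>2 = 1 / 2^(r - l)"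
    using assms by (intro norm_haar_amp_sq) simp
  ultimately show ?thesis
    using fourier_haar_phi[OF assms, of 0] by (simp add: norm_mult norm_divide power_mult_distrib power_divide)
qed

lemma norm_fourier_haar_phi_sq_le_quadratic:
  assumes "l < r"
  shows "(cmod (fourier r (haar_phi r l 0) \<omega>))\<^sup>2 \<le> pi\<^sup>2 * (of_int \<omega>)\<^sup>2 / (4 * (2^l)^3)"
proof -
  obtain d where d: "r - l = Suc d" using assms by (metis Suc_diff_Suc)
  define H :: real where "H = 2^d"
  define X :: real where "X = 2^l"
  define \<theta> where "\<theta> = 2 * pi * of_int \<omega> / 2 ^ r"
  have "r = l + Suc d" using d by linarith
  then have r: "(2::real) ^ r = X * (2 * H)" unfolding X_def H_def by (simp add: power_add)
  have rl: "(2::real) ^ (r - l) = 2 * H" unfolding d H_def by simp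
  have "(cmod (1 - twiddle r \<omega> ^ 2^d))\<^sup>2 \<le> (H * \<theta>)\<^sup>2"
    unfolding twiddle_power using cmod_1_minus_cis_sq_le by (simp add: H_def \<theta>_def)
  moreover have "(cmod (\<Sum>s<2^d. twiddle r \<omega> ^ s))\<^sup>2 \<le> H\<^sup>2"
    using norm_sum[of "\<lambda>s. twiddle r \<omega> ^ s" "{..<2^d}"] by (simp add: H_def norm_power power_mono)
  ultimately have "(cmod (fourier r (haar_phi r l 0) \<omega>))\<^sup>2
      \<le> 1 / 2^r * (1 / 2^(r - l)) * (H * \<theta>)\<^sup>2 * H\<^sup>2"
    unfolding norm_fourier_haar_phi_sq[OF d] by (intro mult_mono mult_nonneg_nonneg) auto
  also have "\<dots> = pi\<^sup>2 * (of_int \<omega>)\<^sup>2 / (4 * X^3)"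
    unfolding r rl \<theta>_def using X_def H_def by (simp add: field_simps power2_eq_square power3_eq_cube)
  finally show ?thesis unfolding X_def .
qed

lemma norm_fourier_haar_phi_sq_le_inverse_square:
  assumes "l < r" "\<omega> \<noteq> 0" "\<bar>\<omega>\<bar> \<le> 2^(r - 1)"
  shows "(cmod (fourier r (haar_phi r l 0) \<omega>))\<^sup>2 \<le> 9 * 2^l / (of_int \<omega>)\<^sup>2"
proof -
  obtain d where d: "r - l = Suc d" using assms by (metis Suc_diff_Suc)
  define \<theta> where "\<theta> = 2 * pi * of_int \<omega> / 2 ^ r"
  define F where "F = (cmod (fourier r (haar_phi r l 0) \<omega>))\<^sup>2"
  define Q where "Q = (cmod (1 - twiddle r \<omega>))\<^sup>2"
  define T where "T = (cmod (1 - twiddle r \<omega> ^ 2^d))\<^sup>2"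
  define G where "G = (cmod (\<Sum>s<2^d. twiddle r \<omega> ^ s))\<^sup>2"
  have r: "(2::real) ^ r = 2 * 2^(r - 1)" "(2::real) ^ r = 2^l * 2^(r - l)"
    using assms(1) by (simp_all flip: power_Suc power_add)
  have "\<bar>of_int \<omega>\<bar> \<le> (2::real) ^ (r - 1)"
    using assms(3) by (metis of_int_abs of_int_le_iff of_int_numeral of_int_power)
  then have "\<bar>\<theta>\<bar> \<le> pi" unfolding \<theta>_def r(1) by (simp add: abs_mult field_simps)
  then have Q: "\<theta>\<^sup>2 / 9 \<le> Q"
    unfolding Q_def twiddle_def \<theta>_def[symmetric] by (rule cmod_1_minus_cis_sq_ge)
  have "T = Q * G"
    unfolding T_def Q_def G_def one_diff_power_eq by (simp add: norm_mult power_mult_distrib)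
  moreover have "F = 1 / 2^r * (1 / 2^(r - l)) * T * G"
    unfolding F_def T_def G_def by (rule norm_fourier_haar_phi_sq[OF d])
  ultimately have "F * Q = 1 / 2^r * (1 / 2^(r - l)) * (T * T)" by (simp add: algebra_simps)
  moreover have "T * T \<le> 4 * 4"
    using cmod_1_minus_cis_sq_le_4 unfolding T_def twiddle_power by (intro mult_mono) auto
  ultimately have "F * Q \<le> 16 / (2^r * 2^(r - l))" by (simp add: divide_right_mono)
  moreover have "F * (\<theta>\<^sup>2 / 9) \<le> F * Q" using Q unfolding F_def by (intro mult_left_mono) auto
  ultimately have "F * (\<theta>\<^sup>2 / 9) \<le> 16 / (2^r * 2^(r - l))" by linarith
  moreover have "\<theta>\<^sup>2 > 0" unfolding \<theta>_def using assms(2) by simp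
  ultimately have "F \<le> 144 / (2^r * 2^(r - l) * \<theta>\<^sup>2)" by (simp add: field_simps)
  also have "\<dots> = 36 * 2^l / (pi\<^sup>2 * (of_int \<omega>)\<^sup>2)"
    unfolding \<theta>_def r(2) using assms(2) by (simp add: field_simps power2_eq_square)
  also have "\<dots> \<le> 36 * 2^l / (4 * (of_int \<omega>)\<^sup>2)"
  proof -
    have "2 * 2 \<le> pi * pi" using pi_ge_two by (intro mult_mono) auto
    then have "4 \<le> pi\<^sup>2" by (simp add: power2_eq_square)
    then show ?thesis using assms(2) by (intro divide_left_mono mult_right_mono mult_pos_pos) auto
  qed
  finally show ?thesis unfolding F_def by simp
qed

lemma fourier_haar_psi: "fourier r (haar_psi r) \<omega> = of_real (1 / 2^r) * (\<Sum>t<2^r. twiddle r \<omega> ^ t)"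
proof -
  have "sqrt (2 ^ r) = 2 powr (real r / 2)"
    by (rule real_sqrt_unique) (simp_all add: power2_eq_square powr_realpow flip: powr_add)
  then have c: "1 / sqrt (2 ^ r) * 2 powr (- real r / 2) = 1 / 2 ^ r"
    by (simp add: powr_minus_divide powr_realpow flip: powr_add)
  have "(\<Sum>t<2^r. haar_psi r t * twiddle r \<omega> ^ t)
      = of_real (2 powr (- real r / 2)) * (\<Sum>t<2^r. twiddle r \<omega> ^ t)"
    unfolding sum_distrib_left by (rule sum.cong) (auto simp: haar_psi_def)
  then show ?thesis unfolding fourier_eq_twiddle by (simp add: mult.assoc flip: c)
qed

lemma norm_fourier_haar_psi_le: "cmod (fourier r (haar_psi r) \<omega>) \<le> 1"
proof -
  have "cmod (\<Sum>t<2^r. twiddle r \<omega> ^ t) \<le> 2^r"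
    using norm_sum[of "\<lambda>t. twiddle r \<omega> ^ t" "{..<2^r}"] by (simp add: norm_power)
  then show ?thesis unfolding fourier_haar_psi by (simp add: norm_mult norm_divide norm_power divide_le_eq)
qed

lemma fourier_haar_psi_eq_0:
  assumes "\<omega> \<noteq> 0" "\<bar>\<omega>\<bar> < 2^r"
  shows "fourier r (haar_psi r) \<omega> = 0"
proof -
  have "twiddle r \<omega> \<noteq> 1"
    unfolding twiddle_def using cis_2pi_fraction_neq_1[of "2^r" \<omega>] assms by simp
  moreover have "twiddle r \<omega> ^ 2^r = 1"
    unfolding twiddle_power by simp
  ultimately show ?thesis unfolding fourier_haar_psi by (simp add: sum_gp_strict)
qed

section \<open>Frequency bands and the blocks U_{jl}\<close>

lemma band_bounds:
  assumes "\<omega> \<in> band j"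
  shows "- (2^j) + 1 \<le> \<omega>" "\<omega> \<le> 2^j" "\<bar>\<omega>\<bar> \<le> 2^j" "0 < j \<Longrightarrow> 2^(j - 1) \<le> \<bar>\<omega>\<bar>"
proof -
  have "- (2^j) + 1 \<le> \<omega> \<and> \<omega> \<le> 2^j \<and> \<bar>\<omega>\<bar> \<le> 2^j \<and> (0 < j \<longrightarrow> 2^(j - 1) \<le> \<bar>\<omega>\<bar>)"
  proof (cases "j = 0")
    case False
    define a b where "a = (2::int) ^ (j - 1)" and "b = (2::int) ^ j"
    have "0 < a" "a \<le> b" unfolding a_def b_def by (auto intro: power_increasing)
    moreover have "\<omega> \<in> {- b + 1..- a} \<union> {a + 1..b}"
      using assms False unfolding band_def a_def b_def by simp
    ultimately show ?thesis unfolding a_def[symmetric] b_def[symmetric] by auto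
  qed (use assms in \<open>auto simp: band_def\<close>)
  then show "- (2^j) + 1 \<le> \<omega>" "\<omega> \<le> 2^j" "\<bar>\<omega>\<bar> \<le> 2^j" "0 < j \<Longrightarrow> 2^(j - 1) \<le> \<bar>\<omega>\<bar>"
    by auto
qed

lemma band_bounds_real:
  assumes "\<omega> \<in> band j"
  shows "\<bar>real_of_int \<omega>\<bar> \<le> 2^j" "0 < j \<Longrightarrow> 2^(j - 1) \<le> \<bar>real_of_int \<omega>\<bar>"
  using band_bounds(3,4)[OF assms] by (metis of_int_abs of_int_le_iff of_int_numeral of_int_power)+

lemma card_band: "card (band j) \<le> 2 * 2^j"
proof -
  have "card (band j) \<le> card {- (2^j) + 1..(2::int)^j}"
    using band_bounds(1,2) by (intro card_mono) auto
  then show ?thesis by (simp add: nat_mult_distrib nat_power_eq)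
qed

lemma Ublock_eq_modulated:
  assumes "0 < l" "l < r" "p < 2^l"
  shows "Ublock r j l \<omega> p = fourier r (haar_phi r l 0) \<omega> * cis (2 * pi * of_int \<omega> * of_nat p / 2^l)"
  unfolding Ublock_def using assms fourier_haar_phi_translate[OF assms(2,3)] by (simp add: mult.commute)

lemma sqnorm_apply_Ublock_le_sup:
  assumes "0 < l" "l < r" "0 \<le> A"
    and A: "\<And>\<omega>. \<omega> \<in> band j \<Longrightarrow> (cmod (fourier r (haar_phi r l 0) \<omega>))\<^sup>2 \<le> A"
  shows "sqnorm_apply (Ublock r j l) (band j) (cols l) x
    \<le> A * 2^(max j l + 1) * (\<Sum>p\<in>cols l. (cmod (x p))\<^sup>2)"
proof -
  define m where "m = max j l"
  have N: "2^(m + 1 - l) * 2^l = (2::nat) ^ (m + 1)"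
    unfolding m_def by (simp flip: power_add)
  have window: "band j \<subseteq> {- (2^m) + 1..<- (2^m) + 1 + int (2^(m + 1 - l) * 2^l)}"
  proof
    fix \<omega> assume "\<omega> \<in> band j"
    then have "- (2^j) + 1 \<le> \<omega>" "\<omega> \<le> 2^j" by (rule band_bounds)+
    moreover have "(2::int) ^ j \<le> 2^m" unfolding m_def by (simp add: power_increasing)
    moreover have "int (2 ^ (m + 1)) = 2 * 2^m" by simp
    ultimately show "\<omega> \<in> {- (2^m) + 1..<- (2^m) + 1 + int (2^(m + 1 - l) * 2^l)}"
      unfolding N atLeastLessThan_iff by linarith
  qed
  have "sqnorm_apply (Ublock r j l) (band j) {..<2^l} x
      \<le> A * real (2^(m + 1 - l) * 2^l) * (\<Sum>p<2^l. (cmod (x p))\<^sup>2)"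
    by (rule sqnorm_apply_le_modulated_dft[OF _ window assms(3) _ A])
      (simp_all add: Ublock_eq_modulated[OF assms(1,2)])
  then show ?thesis using assms(1) unfolding N by (simp add: cols_def m_def atLeast0LessThan)
qed

lemma sqnorm_apply_Ublock_le_band_le_level:
  assumes "0 < l" "l < r" "j \<le> l"
  shows "sqnorm_apply (Ublock r j l) (band j) (cols l) x \<le> 144 / 2^(l - j) * (\<Sum>p\<in>cols l. (cmod (x p))\<^sup>2)"
proof -
  define a :: real where "a = 2^j"
  define b :: real where "b = 2^(l - j)"
  have ab: "a > 0" "b \<ge> 1" unfolding a_def b_def by auto
  have l: "(2::real) ^ l = a * b" unfolding a_def b_def using assms(3) by (simp flip: power_add)
  define A :: real where "A = pi\<^sup>2 * a\<^sup>2 / (4 * (2^l)^3)"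
  have "(cmod (fourier r (haar_phi r l 0) \<omega>))\<^sup>2 \<le> A" if "\<omega> \<in> band j" for \<omega>
  proof -
    have "\<bar>of_int \<omega>\<bar> \<le> a" using band_bounds_real(1)[OF that] unfolding a_def .
    then have "(of_int \<omega>)\<^sup>2 \<le> a\<^sup>2" by (metis abs_ge_zero power2_abs power_mono)
    then have "pi\<^sup>2 * (of_int \<omega>)\<^sup>2 / (4 * (2^l)^3) \<le> A"
      unfolding A_def by (intro divide_right_mono mult_left_mono) auto
    then show ?thesis using norm_fourier_haar_phi_sq_le_quadratic[OF assms(2)] by (rule order_trans[rotated])
  qed
  then have "sqnorm_apply (Ublock r j l) (band j) (cols l) x
      \<le> A * 2^(max j l + 1) * (\<Sum>p\<in>cols l. (cmod (x p))\<^sup>2)"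
    using assms(1,2) by (intro sqnorm_apply_Ublock_le_sup) (auto simp: A_def)
  moreover have "A * 2^(max j l + 1) \<le> 144 / 2^(l - j)"
  proof -
    have "A * 2^(max j l + 1) = pi\<^sup>2 / (2 * b\<^sup>2)"
      unfolding A_def using assms(3) ab by (simp add: max_def l field_simps power2_eq_square power3_eq_cube)
    also have "\<dots> \<le> 16 / (2 * b\<^sup>2)"
    proof -
      have "pi\<^sup>2 \<le> 4\<^sup>2" using pi_less_4 pi_gt_zero by (intro power_mono) auto
      then show ?thesis using ab by (intro divide_right_mono) auto
    qed
    also have "\<dots> \<le> 144 / b"
      using ab by (simp add: field_simps power2_eq_square)
    finally show ?thesis unfolding b_def .
  qed
  ultimately show ?thesis by (meson mult_right_mono order_trans sum_nonneg zero_le_power2)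
qed

lemma sqnorm_apply_Ublock_le_level_less_band:
  assumes "0 < l" "l < j" "j < r"
  shows "sqnorm_apply (Ublock r j l) (band j) (cols l) x \<le> 144 / 2^(j - l) * (\<Sum>p\<in>cols l. (cmod (x p))\<^sup>2)"
proof -
  define c :: real where "c = 2^(j - 1)"
  define e :: real where "e = 2^(j - l)"
  have ce: "c > 0" "e > 0" unfolding c_def e_def by auto
  have j: "(2::real) ^ j = 2 * c" unfolding c_def using assms(2) by (simp flip: power_Suc)
  have l: "(2::real) ^ l * e = 2 * c" unfolding e_def j[symmetric] using assms(2) by (simp flip: power_add)
  define A :: real where "A = 9 * 2^l / c\<^sup>2"
  have "(cmod (fourier r (haar_phi r l 0) \<omega>))\<^sup>2 \<le> A" if "\<omega> \<in> band j" for \<omega>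
  proof -
    have "c \<le> \<bar>of_int \<omega>\<bar>" using band_bounds_real(2)[OF that] assms unfolding c_def by simp
    then have "c\<^sup>2 \<le> \<bar>of_int \<omega>\<bar>\<^sup>2" "\<omega> \<noteq> 0"
      using ce power_mono[of c "\<bar>of_int \<omega>\<bar>" 2] by auto
    moreover have "(2::int) ^ j \<le> 2^(r - 1)" using assms by (intro power_increasing) auto
    then have "\<bar>\<omega>\<bar> \<le> 2^(r - 1)" using band_bounds(3)[OF that] by linarith
    ultimately have "(cmod (fourier r (haar_phi r l 0) \<omega>))\<^sup>2 \<le> 9 * 2^l / (of_int \<omega>)\<^sup>2"
      using assms by (intro norm_fourier_haar_phi_sq_le_inverse_square) auto
    also have "\<dots> \<le> A"
      unfolding A_def using \<open>c\<^sup>2 \<le> \<bar>of_int \<omega>\<bar>\<^sup>2\<close> \<open>\<omega> \<noteq> 0\<close> ce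
      by (intro divide_left_mono mult_pos_pos) auto
    finally show ?thesis .
  qed
  then have "sqnorm_apply (Ublock r j l) (band j) (cols l) x
      \<le> A * 2^(max j l + 1) * (\<Sum>p\<in>cols l. (cmod (x p))\<^sup>2)"
    using assms by (intro sqnorm_apply_Ublock_le_sup) (auto simp: A_def)
  moreover have "A * 2^(max j l + 1) \<le> 144 / 2^(j - l)"
  proof -
    have "(2::real) ^ (max j l + 1) = 4 * c" using assms j by (simp add: max_def)
    then have "A * 2^(max j l + 1) = 36 * (2^l * e) / (c * e)"
      unfolding A_def using ce by (simp add: power2_eq_square)
    also have "\<dots> = 72 / e" unfolding l using ce by simp
    also have "\<dots> \<le> 144 / e" using ce by (intro divide_right_mono) auto
    finally show ?thesis unfolding e_def .
  qed
  ultimately show ?thesis by (meson mult_right_mono order_trans sum_nonneg zero_le_power2)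
qed

lemma Ublock_level_0_row_bound:
  assumes "j < r" "\<omega> \<in> band j"
  shows "(\<Sum>p\<in>cols 0. (cmod (Ublock r j 0 \<omega> p))\<^sup>2) \<le> 36 / 4^j"
proof -
  have row: "(\<Sum>p\<in>cols 0. (cmod (Ublock r j 0 \<omega> p))\<^sup>2)
      = (cmod (fourier r (haar_psi r) \<omega>))\<^sup>2 + (cmod (fourier r (haar_phi r 0 0) \<omega>))\<^sup>2"
    by (simp add: cols_def Ublock_def)
  show ?thesis
  proof (cases "j = 0")
    case True
    have "(cmod (fourier r (haar_psi r) \<omega>))\<^sup>2 \<le> 1"
      using norm_fourier_haar_psi_le[of r \<omega>] by (simp add: abs_square_le_1)
    moreover have "(cmod (fourier r (haar_phi r 0 0) \<omega>))\<^sup>2 \<le> pi\<^sup>2 * (of_int \<omega>)\<^sup>2 / 4"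
      using norm_fourier_haar_phi_sq_le_quadratic[of 0 r \<omega>] assms(1) by simp
    moreover have "pi\<^sup>2 * (of_int \<omega>)\<^sup>2 \<le> 4\<^sup>2 * 1"
      using pi_less_4 pi_gt_zero band_bounds_real(1)[OF assms(2)] True
      by (intro mult_mono power_mono) (auto simp: abs_le_square_iff abs_square_le_1)
    ultimately show ?thesis unfolding row using True by simp
  next
    case False
    have lo: "(2::real) ^ (j - 1) \<le> \<bar>of_int \<omega>\<bar>" using band_bounds_real(2)[OF assms(2)] False by simp
    then have "\<omega> \<noteq> 0" by (auto simp flip: of_int_abs)
    have "(2::int) ^ j \<le> 2^(r - 1)" using assms(1) by (intro power_increasing) auto
    then have hi: "\<bar>\<omega>\<bar> \<le> 2^(r - 1)" using band_bounds(3)[OF assms(2)] by linarith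
    moreover have "(2::int) ^ (r - 1) < 2^r" using assms(1) by (intro power_strict_increasing) auto
    ultimately have "\<bar>\<omega>\<bar> < 2^r" by linarith
    with \<open>\<omega> \<noteq> 0\<close> have "fourier r (haar_psi r) \<omega> = 0" by (rule fourier_haar_psi_eq_0)
    then have "(cmod (fourier r (haar_psi r) \<omega>))\<^sup>2 = 0" by simp
    moreover have "(cmod (fourier r (haar_phi r 0 0) \<omega>))\<^sup>2 \<le> 9 / (of_int \<omega>)\<^sup>2"
      using norm_fourier_haar_phi_sq_le_inverse_square[of 0 r \<omega>] assms(1) \<open>\<omega> \<noteq> 0\<close> hi by simp
    moreover have "9 / (of_int \<omega>)\<^sup>2 \<le> 9 / ((2::real) ^ (j - 1))\<^sup>2"
      using lo \<open>\<omega> \<noteq> 0\<close> power_mono[OF lo, of 2] by (intro divide_left_mono) auto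
    moreover have "9 / ((2::real) ^ (j - 1))\<^sup>2 = 36 / 4^j"
    proof -
      have "((2::real) ^ (j - 1))\<^sup>2 * 4 = 4^j"
        using power_minus_mult[of j "4::real"] False by (simp add: power2_eq_square flip: power_mult_distrib)
      then show ?thesis by (simp add: field_simps)
    qed
    ultimately show ?thesis unfolding row by linarith
  qed
qed

lemma sqnorm_apply_Ublock_le_level_0:
  assumes "j < r"
  shows "sqnorm_apply (Ublock r j 0) (band j) (cols 0) x \<le> 144 / 2^j * (\<Sum>p\<in>cols 0. (cmod (x p))\<^sup>2)"
proof -
  have "(\<Sum>\<omega>\<in>band j. \<Sum>p\<in>cols 0. (cmod (Ublock r j 0 \<omega> p))\<^sup>2) \<le> card (band j) * (36 / 4^j)"
    using Ublock_level_0_row_bound[OF assms] by (rule sum_bounded_above)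
  also have "\<dots> \<le> (2 * 2^j) * (36 / 4^j)"
    using of_nat_mono[OF card_band[of j], where 'a=real] by (intro mult_right_mono) auto
  also have "\<dots> = 72 / 2^j"
    by (simp add: field_simps flip: power_mult_distrib)
  also have "\<dots> \<le> 144 / 2^j" by (intro divide_right_mono) auto
  finally show ?thesis
    using sqnorm_apply_le_frobenius[of "Ublock r j 0" "band j" "cols 0" x]
    by (meson mult_right_mono order_trans sum_nonneg zero_le_power2)
qed

lemma powr_minus_abs_diff_half_sq:
  "(2 powr (- \<bar>real j - real l\<bar> / 2))\<^sup>2 = 1 / 2^(if j \<le> l then l - j else j - l)"
proof -
  have "\<bar>real j - real l\<bar> = real (if j \<le> l then l - j else j - l)" by auto
  moreover have "(2 powr (- \<bar>real j - real l\<bar> / 2))\<^sup>2 = 2 powr (- \<bar>real j - real l\<bar>)"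
    by (simp add: power2_eq_square flip: powr_add)
  ultimately show ?thesis by (simp add: powr_minus_divide powr_realpow)
qed

lemma sqnorm_apply_Ublock_le_decay:
  assumes "j < r" "l < r"
  shows "sqnorm_apply (Ublock r j l) (band j) (cols l) x
    \<le> 144 / 2^(if j \<le> l then l - j else j - l) * (\<Sum>p\<in>cols l. (cmod (x p))\<^sup>2)"
proof -
  consider "l = 0" | "0 < l" "j \<le> l" | "0 < l" "l < j" by linarith
  then show ?thesis
  proof cases
    case 1
    then show ?thesis using sqnorm_apply_Ublock_le_level_0[OF assms(1)] by (cases "j = 0") auto
  next
    case 2
    then show ?thesis using sqnorm_apply_Ublock_le_band_le_level[OF _ assms(2)] by simp
  next
    case 3
    then show ?thesis using sqnorm_apply_Ublock_le_level_less_band[OF _ _ assms(1)] by simp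
  qed
qed

theorem lemma3:
  shows "\<exists>C>0. \<forall>r\<ge>1. \<forall>j<r. \<forall>l<r.
           op_norm2 (Ublock r j l) (band j) (cols l)
             \<le> C * 2 powr (- \<bar>real j - real l\<bar> / 2)"
proof (intro exI[of _ 12] conjI allI impI)
  fix r j l :: nat assume "1 \<le> r" "j < r" "l < r"
  show "op_norm2 (Ublock r j l) (band j) (cols l) \<le> 12 * 2 powr (- \<bar>real j - real l\<bar> / 2)"
  proof (rule op_norm2_le)
    fix x :: "nat \<Rightarrow> complex"
    assume x: "(\<Sum>p\<in>cols l. (cmod (x p))\<^sup>2) \<le> 1"
    define D :: real where "D = 144 / 2^(if j \<le> l then l - j else j - l)"
    have "sqnorm_apply (Ublock r j l) (band j) (cols l) x \<le> D * (\<Sum>p\<in>cols l. (cmod (x p))\<^sup>2)"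
      unfolding D_def using \<open>j < r\<close> \<open>l < r\<close> by (rule sqnorm_apply_Ublock_le_decay)
    also have "\<dots> \<le> D" by (rule mult_left_le[OF x]) (simp add: D_def)
    also have "\<dots> = (12 * 2 powr (- \<bar>real j - real l\<bar> / 2))\<^sup>2"
      unfolding D_def power_mult_distrib powr_minus_abs_diff_half_sq by simp
    finally show "sqnorm_apply (Ublock r j l) (band j) (cols l) x
      \<le> (12 * 2 powr (- \<bar>real j - real l\<bar> / 2))\<^sup>2" .
  qed simp
qed simp

end
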